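(* Let the polynomials $L_h(z)$, $h\ge 0$, be defined by $L_0(z)=z$, $L_1(z)=z^2$ and $L_{h+2}(z)=L_{h+1}(z)\bigl(L_{h+1}(z)+L_h(z)\bigr)$ for all $h\ge 0$. For each $h$, let $\gamma_h$ be the unique positive real solution of $L_h(z)=1/2$. Let $\ell_n$ be the coefficient of $z^n$ in $L(z)=\sum_{h\ge0}L_h(z)$. Then the limit $\gamma=\lim_{h\to\infty}\gamma_h=0.67418\ldots$ exists, and \[\log_2(\ell_n)=n\log_2(\gamma^{-1})+\log\theta(n),\qquad n\log_2(\gamma^{-1})=n(0.568\ldots),\] for a function $\theta$ growing at most sub-exponentially, i.e. $\theta(n)=o(\kappa^n)$ for every $\kappa>1$.
   Context: $L_h(z)$ is the generating function of Left-Leaning AVL trees of height $h$ (AVL trees in which at every node the left subtree's height is at least the right subtree's height), and $\ell_n$ is the corresponding counting sequence of Left-Leaning AVL trees. *)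

theory Defs
  imports "HOL-Computational_Algebra.Polynomial" "HOL-Library.Landau_Symbols" Complex_Main
begin

text \<open>Generating polynomials of left-leaning AVL trees of height h (natural coefficients).\<close>
fun LL :: "nat \<Rightarrow> nat poly" where
  "LL 0 = [:0, 1:]"
| "LL (Suc 0) = [:0, 0, 1:]"
| "LL (Suc (Suc h)) = LL (Suc h) * (LL (Suc h) + LL h)"

definition gamma :: "nat \<Rightarrow> real" where
  "gamma h = (THE z. z > 0 \<and> poly (map_poly real (LL h)) z = 1 / 2)"

text \<open>ell n: coefficient of z^n in L(z) = sum over h of L_h(z); only finitely many
  L_h contribute to a given coefficient, so this is a finite-support sum.\<close>
definition ell :: "nat \<Rightarrow> nat" where
  "ell n = (\<Sum>h \<in> {h. coeff (LL h) n \<noteq> 0}. coeff (LL h) n)"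

end

theory Submission
  imports Defs
begin

text \<open>
  For fixed \<open>z \<ge> 0\<close> the values \<open>x h = L_h(z) = Lr h z\<close> satisfy
  \<open>x (h+2) = x (h+1) * (x (h+1) + x h)\<close>. Once two consecutive values are at most \<open>1/2\<close>
  with sum below \<open>1\<close>, the sequence decays geometrically; once both are at least \<open>1/2\<close> with
  sum above \<open>1\<close>, it stays above \<open>1/2\<close> for ever. All monomials of \<open>L_h\<close> have degree
  \<open>> h\<close>, so \<open>L_h(q z) \<ge> q^(h+1) L_h(z)\<close>; hence no two points lie outside both regimes, the
  supremum \<open>\<gamma>\<close> of the decaying regime separates them, and the roots \<open>\<gamma>_h\<close> of
  \<open>L_h = 1/2\<close> are squeezed towards \<open>\<gamma>\<close>. Below \<open>\<gamma>\<close> the series \<open>\<Sum>h. L_h(z)\<close>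
  converges, and \<open>\<ell>_n z^n \<le> \<Sum>h. L_h(z)\<close> bounds \<open>\<theta>(n) = \<ell>_n \<gamma>^n\<close> by
  \<open>C (\<gamma>/z)^n\<close> for every \<open>z < \<gamma>\<close>; \<open>\<ell>_n > 0\<close> because the coefficients of
  \<open>L_h\<close> are positive on \<open>[F_(h+2), 2^h]\<close>. The digits of \<open>\<gamma>\<close> are certified by
  propagating rounded bounds through the recurrence at \<open>0.67418\<close> and \<open>0.674185\<close>.
\<close>

lemma map_poly_of_nat_add:
  "map_poly of_nat (p + q) = (map_poly of_nat p + map_poly of_nat q :: 'a::semiring_1 poly)"
  by (rule poly_eqI) (simp add: coeff_map_poly)

lemma map_poly_of_nat_mult:
  "map_poly of_nat (p * q) = (map_poly of_nat p * map_poly of_nat q :: 'a::comm_semiring_1 poly)"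
  by (rule poly_eqI) (simp add: coeff_map_poly coeff_mult)

lemma poly_map_real_eq_sum:
  "poly (map_poly real p) z = (\<Sum>i\<le>degree p. real (coeff p i) * z ^ i)"
  by (simp add: poly_altdef coeff_map_poly degree_map_poly)

lemma coeff_mult_power_le_poly_map_real:
  fixes p :: "nat poly"
  assumes "0 \<le> z"
  shows "real (coeff p n) * z ^ n \<le> poly (map_poly real p) z"
proof (cases "n \<le> degree p")
  case True
  then show ?thesis
    unfolding poly_map_real_eq_sum using assms by (intro member_le_sum) auto
next
  case False
  then show ?thesis
    unfolding poly_map_real_eq_sum using assms by (simp add: coeff_eq_0 sum_nonneg)
qed

lemma poly_map_real_scale:
  fixes p :: "nat poly"
  assumes low: "\<And>n. n < m \<Longrightarrow> coeff p n = 0" and "1 \<le> q" "0 \<le> z"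
  shows "q ^ m * poly (map_poly real p) z \<le> poly (map_poly real p) (q * z)"
proof -
  have "q ^ m * (real (coeff p i) * z ^ i) \<le> real (coeff p i) * (q * z) ^ i" for i
  proof (cases "i < m")
    case False
    then have "q ^ m \<le> q ^ i" using \<open>1 \<le> q\<close> by (simp add: power_increasing)
    then show ?thesis
      using assms by (simp add: power_mult_distrib mult_right_mono mult.left_commute)
  qed (simp add: low)
  then show ?thesis by (simp add: poly_map_real_eq_sum sum_distrib_left sum_mono)
qed

section \<open>Coefficients of \<open>LL h\<close>\<close>

lemma coeff_LL_eq_0: "n \<le> h \<Longrightarrow> coeff (LL h) n = 0"
proof (induction h arbitrary: n rule: LL.induct)
  case (3 h)
  have "monom 1 (Suc (Suc h)) dvd LL (Suc h)" "monom 1 (Suc h) dvd LL (Suc h) + LL h"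
    unfolding monom_1_dvd_iff' using "3.IH" by auto
  then have "monom 1 (Suc (Suc h)) * monom 1 (Suc h) dvd LL (Suc h) * (LL (Suc h) + LL h)"
    by (rule mult_dvd_mono)
  then have "monom 1 (Suc (Suc h) + Suc h) dvd LL (Suc (Suc h))"
    by (simp only: mult_monom mult_1 LL.simps)
  then show ?case
    using "3.prems" unfolding monom_1_dvd_iff' by simp
qed (auto simp: le_Suc_eq)

lemma finite_LL_support: "finite {h. coeff (LL h) n \<noteq> 0}"
proof (rule finite_subset)
  show "{h. coeff (LL h) n \<noteq> 0} \<subseteq> {..<n}"
    using coeff_LL_eq_0 not_less by blast
qed simp

text \<open>The fewest nodes of a left-leaning AVL tree of height \<open>h\<close>, the Fibonacci number \<open>F_(h+2)\<close>.\<close>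
fun min_nodes :: "nat \<Rightarrow> nat" where
  "min_nodes 0 = 1"
| "min_nodes (Suc 0) = 2"
| "min_nodes (Suc (Suc h)) = min_nodes (Suc h) + min_nodes h"

lemma min_nodes_le_two_power: "min_nodes h \<le> 2 ^ h \<and> min_nodes (Suc h) \<le> 2 ^ h + 1"
proof (induction h)
  case (Suc h)
  moreover have "1 \<le> (2::nat) ^ h" by simp
  ultimately show ?case
    unfolding min_nodes.simps(3) power_Suc by linarith
qed simp

lemma coeff_mult_pos:
  fixes p q :: "nat poly"
  assumes p: "\<And>i. i \<in> {a..b} \<Longrightarrow> 0 < coeff p i"
    and q: "\<And>j. j \<in> {c..d} \<Longrightarrow> 0 < coeff q j"
    and "a \<le> b" "c \<le> d" and n: "n \<in> {a + c..b + d}"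
  shows "0 < coeff (p * q) n"
proof -
  define i where "i = max a (n - d)"
  have i: "i \<in> {a..b}" "n - i \<in> {c..d}" "i \<le> n"
    using n \<open>a \<le> b\<close> \<open>c \<le> d\<close> by (auto simp: i_def)
  have "0 < coeff p i * coeff q (n - i)"
    using p q i by simp
  also have "\<dots> \<le> (\<Sum>j\<le>n. coeff p j * coeff q (n - j))"
    using i by (intro member_le_sum) auto
  finally show ?thesis by (simp add: coeff_mult)
qed

lemma coeff_LL_pos: "n \<in> {min_nodes h..2 ^ h} \<Longrightarrow> 0 < coeff (LL h) n"
proof (induction h arbitrary: n rule: LL.induct)
  case (3 h)
  have IH_h: "\<And>n. n \<in> {min_nodes h..2 ^ h} \<Longrightarrow> 0 < coeff (LL h) n"
    and IH_Suc: "\<And>n. n \<in> {min_nodes (Suc h)..2 ^ Suc h} \<Longrightarrow> 0 < coeff (LL (Suc h)) n"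
    using "3.IH" by blast+
  have sum_pos: "0 < coeff (LL (Suc h) + LL h) n" if "n \<in> {min_nodes h..2 ^ Suc h}" for n
  proof (cases "n \<le> 2 ^ h")
    case True
    then show ?thesis using that IH_h[of n] by simp
  next
    case False
    then have "min_nodes (Suc h) \<le> n"
      using min_nodes_le_two_power[of h] by simp
    then show ?thesis using that IH_Suc[of n] by simp
  qed
  have "(2::nat) ^ Suc (Suc h) = 2 ^ Suc h + 2 ^ Suc h"
    by simp
  then show ?case
    using coeff_mult_pos[OF IH_Suc sum_pos] "3.prems" min_nodes_le_two_power[of h] by simp
qed (auto simp: numeral_eq_Suc)

lemma ex_height_size_range: "1 \<le> n \<Longrightarrow> \<exists>h. n \<in> {min_nodes h..2 ^ h}"
proof (induction n rule: nat_induct_at_least)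
  case base
  then show ?case by (intro exI[of _ 0]) simp
next
  case (Suc n)
  then obtain h where h: "n \<in> {min_nodes h..2 ^ h}" by blast
  show ?case
  proof (cases "n = 2 ^ h")
    case True
    then show ?thesis
      using min_nodes_le_two_power[of h] by (intro exI[of _ "Suc h"]) auto
  next
    case False
    then show ?thesis using h by (intro exI[of _ h]) auto
  qed
qed

lemma ell_pos: "1 \<le> n \<Longrightarrow> 0 < ell n"
proof -
  assume "1 \<le> n"
  then obtain h where "0 < coeff (LL h) n"
    using ex_height_size_range coeff_LL_pos by blast
  moreover have "coeff (LL h) n \<le> ell n"
    unfolding ell_def using calculation finite_LL_support by (intro member_le_sum) auto
  ultimately show ?thesis by simp
qed

section \<open>The recurrence \<open>x (h+2) = x (h+1) * (x (h+1) + x h)\<close>\<close>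

definition ll_recurrence :: "(nat \<Rightarrow> real) \<Rightarrow> bool" where
  "ll_recurrence x \<longleftrightarrow> (\<forall>k. 0 \<le> x k \<and> x (Suc (Suc k)) = x (Suc k) * (x (Suc k) + x k))"

definition subcritical :: "(nat \<Rightarrow> real) \<Rightarrow> bool" where
  "subcritical x \<longleftrightarrow> (\<exists>h. x h \<le> 1/2 \<and> x (Suc h) \<le> 1/2 \<and> x h + x (Suc h) < 1)"

definition supercritical :: "(nat \<Rightarrow> real) \<Rightarrow> bool" where
  "supercritical x \<longleftrightarrow> (\<exists>h. 1/2 \<le> x h \<and> 1/2 \<le> x (Suc h) \<and> 1 < x h + x (Suc h))"

lemma not_subcritical_half_le:
  "\<not> subcritical x \<Longrightarrow> 1/2 \<le> x h \<or> 1/2 \<le> x (Suc h)"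
  unfolding subcritical_def by (metis add_strict_mono field_sum_of_halves less_eq_real_def not_le)

lemma ll_recurrenceD:
  assumes "ll_recurrence x"
  shows "0 \<le> x k" "x (Suc (Suc k)) = x (Suc k) * (x (Suc k) + x k)"
  using assms by (auto simp: ll_recurrence_def)

lemma ll_recurrence_subcritical_contracts:
  assumes x: "ll_recurrence x" and "subcritical x"
  obtains r N where "0 \<le> r" "r < 1" "\<And>k. N \<le> k \<Longrightarrow> x (Suc k) \<le> r * x k \<and> x k \<le> 1/2"
proof -
  obtain h where h: "x h \<le> 1/2" "x (Suc h) \<le> 1/2" "x h + x (Suc h) < 1"
    using \<open>subcritical x\<close> by (auto simp: subcritical_def)
  note rec = ll_recurrenceD[OF x]
  define r where "r = x (Suc h) + x (Suc (Suc h))"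
  have "x (Suc (Suc h)) \<le> x (Suc h) * 1"
    unfolding rec(2) using h rec(1) by (intro mult_left_mono) auto
  moreover have "x (Suc (Suc h)) \<le> 1/2 * (x (Suc h) + x h)"
    unfolding rec(2) using h rec(1) by (intro mult_right_mono) auto
  ultimately have "r < 1" and inv_start: "x (Suc (Suc h)) \<le> x (Suc h)"
    using h by (auto simp: r_def)
  have inv: "x k \<le> 1/2 \<and> x (Suc k) \<le> x k \<and> x k + x (Suc k) \<le> r" if "Suc h \<le> k" for k
    using that
  proof (induction k rule: nat_induct_at_least)
    case base
    then show ?case using h inv_start by (simp add: r_def)
  next
    case (Suc k)
    have "x (Suc (Suc k)) \<le> x (Suc k) * r"
      unfolding rec(2) using Suc.IH rec(1) by (intro mult_left_mono) (auto simp: add.commute)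
    also have "\<dots> \<le> x (Suc k)"
      using \<open>r < 1\<close> rec(1) by (simp add: mult_left_le)
    finally show ?case using Suc.IH by simp
  qed
  show ?thesis
  proof
    show "0 \<le> r" using rec(1) by (simp add: r_def add_nonneg_nonneg)
    show "r < 1" by fact
    fix k assume "Suc (Suc h) \<le> k"
    then obtain j where k: "k = Suc j" "Suc h \<le> j" by (cases k) auto
    have "x (Suc k) \<le> x k * r"
      unfolding k rec(2) using inv[of j] k rec(1) by (intro mult_left_mono) (auto simp: add.commute)
    then show "x (Suc k) \<le> r * x k \<and> x k \<le> 1/2"
      using inv[of k] k by (simp add: mult.commute)
  qed
qed

lemma ll_recurrence_subcritical_summable:
  assumes "ll_recurrence x" "subcritical x"
  shows "summable x"
proof -
  obtain r N where "r < 1" "\<And>k. N \<le> k \<Longrightarrow> x (Suc k) \<le> r * x k"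
    using ll_recurrence_subcritical_contracts[OF assms] by metis
  then show ?thesis
    using ll_recurrenceD(1)[OF assms(1)] by (intro summable_ratio_test[of r N]) auto
qed

lemma ll_recurrence_subcritical_eventually_less_half:
  assumes "ll_recurrence x" "subcritical x"
  shows "eventually (\<lambda>k. x k < 1/2) sequentially"
proof -
  obtain r N where r: "0 \<le> r" "r < 1" and N: "\<And>k. N \<le> k \<Longrightarrow> x (Suc k) \<le> r * x k \<and> x k \<le> 1/2"
    using ll_recurrence_subcritical_contracts[OF assms] by metis
  have "x (Suc k) < 1/2" if "N \<le> k" for k
  proof -
    have "x (Suc k) \<le> r * (1/2)"
      using N[OF that] r ll_recurrenceD(1)[OF assms(1)] by (meson mult_left_mono order_trans)
    also have "\<dots> < 1/2" using r by simp
    finally show ?thesis .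
  qed
  then have "eventually (\<lambda>k. x (Suc k) < 1/2) sequentially"
    by (rule eventually_sequentiallyI)
  then show ?thesis
    by (rule eventually_sequentially_Suc [THEN iffD1])
qed

lemma ll_recurrence_supercritical_eventually_greater_half:
  assumes x: "ll_recurrence x" and "supercritical x"
  shows "eventually (\<lambda>k. 1/2 < x k) sequentially"
proof -
  obtain h where h: "1/2 \<le> x h" "1/2 \<le> x (Suc h)" "1 < x h + x (Suc h)"
    using \<open>supercritical x\<close> by (auto simp: supercritical_def)
  note rec = ll_recurrenceD[OF x]
  define r where "r = x (Suc h) + x (Suc (Suc h))"
  have "x (Suc h) * 1 < x (Suc (Suc h))"
    unfolding rec(2) using h by (intro mult_strict_left_mono) auto
  then have "1 < r" and inv_start: "x (Suc h) \<le> x (Suc (Suc h))"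
    using h by (auto simp: r_def)
  have inv: "1/2 \<le> x k \<and> x k \<le> x (Suc k) \<and> r \<le> x k + x (Suc k)" if "Suc h \<le> k" for k
    using that
  proof (induction k rule: nat_induct_at_least)
    case base
    then show ?case using h inv_start by (simp add: r_def)
  next
    case (Suc k)
    have "x (Suc k) \<le> x (Suc k) * r"
      using \<open>1 < r\<close> rec(1)[of "Suc k"] by (simp add: mult_le_cancel_left1)
    also have "\<dots> \<le> x (Suc (Suc k))"
      unfolding rec(2) using Suc.IH rec(1) by (intro mult_left_mono) (auto simp: add.commute)
    finally show ?case using Suc.IH by simp
  qed
  show ?thesis
  proof (rule eventually_sequentiallyI[of "Suc (Suc h)"])
    fix k assume "Suc (Suc h) \<le> k"
    then obtain j where k: "k = Suc j" "Suc h \<le> j" by (cases k) auto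
    show "1/2 < x k" using inv[OF k(2)] \<open>1 < r\<close> k by simp
  qed
qed

lemma ll_recurrence_not_subcritical_and_supercritical:
  assumes "ll_recurrence x" "subcritical x"
  shows "\<not> supercritical x"
proof
  assume "supercritical x"
  then have "eventually (\<lambda>k. x k < 1/2 \<and> 1/2 < x k) sequentially"
    using assms ll_recurrence_subcritical_eventually_less_half
      ll_recurrence_supercritical_eventually_greater_half eventually_conj by blast
  then have "eventually (\<lambda>k. False) sequentially"
    by (rule eventually_mono) auto
  then show False by simp
qed

text \<open>The indices are linked by equations so that the two step lemmas apply to numeral indices.\<close>
lemma ll_recurrence_upper_step:
  assumes "ll_recurrence x" "x i \<le> a" "x j \<le> b" "j = Suc i" "k = Suc j" "b * (b + a) \<le> c"
  shows "x k \<le> c"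
proof -
  have "x k = x j * (x j + x i)"
    using assms ll_recurrenceD[OF assms(1)] by simp
  also have "\<dots> \<le> b * (b + a)"
    using assms ll_recurrenceD(1)[OF assms(1), of i] ll_recurrenceD(1)[OF assms(1), of j]
    by (intro mult_mono add_mono) auto
  finally show ?thesis using assms by simp
qed

lemma ll_recurrence_lower_step:
  assumes "ll_recurrence x" "a \<le> x i" "b \<le> x j" "j = Suc i" "k = Suc j" "c \<le> b * (b + a)"
    and "0 \<le> a" "0 \<le> b"
  shows "c \<le> x k"
proof -
  have "b * (b + a) \<le> x j * (x j + x i)"
    using assms by (intro mult_mono add_mono) auto
  also have "\<dots> = x k"
    using assms ll_recurrenceD[OF assms(1)] by simp
  finally show ?thesis using assms by simp
qed

section \<open>The functions \<open>L_h\<close> on the nonnegative reals\<close>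

definition Lr :: "nat \<Rightarrow> real \<Rightarrow> real" where
  "Lr h = poly (map_poly real (LL h))"

lemma Lr_0 [simp]: "Lr 0 z = z"
  by (simp add: Lr_def map_poly_pCons)

lemma Lr_1 [simp]: "Lr 1 z = z\<^sup>2" "Lr (Suc 0) z = z\<^sup>2"
  by (simp_all add: Lr_def map_poly_pCons power2_eq_square)

lemma Lr_Suc_Suc [simp]: "Lr (Suc (Suc h)) z = Lr (Suc h) z * (Lr (Suc h) z + Lr h z)"
  by (simp add: Lr_def map_poly_of_nat_mult map_poly_of_nat_add)

lemma Lr_at_0 [simp]: "Lr h 0 = 0"
  by (induction h rule: LL.induct) auto

lemma Lr_nonneg: "0 \<le> z \<Longrightarrow> 0 \<le> Lr h z"
  by (induction h rule: LL.induct) auto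

lemma ll_recurrence_Lr: "0 \<le> z \<Longrightarrow> ll_recurrence (\<lambda>h. Lr h z)"
  by (simp add: ll_recurrence_def Lr_nonneg)

lemma Lr_strict_mono: "0 \<le> a \<Longrightarrow> a < b \<Longrightarrow> Lr h a < Lr h b"
proof (induction h rule: LL.induct)
  case 2
  then show ?case by (simp add: power_strict_mono)
next
  case (3 h)
  then show ?case
    using Lr_nonneg[of a h] Lr_nonneg[of a "Suc h"] by (simp add: add_strict_mono mult_strict_mono)
qed simp

lemma Lr_less_iff: "0 \<le> a \<Longrightarrow> 0 \<le> b \<Longrightarrow> Lr h a < Lr h b \<longleftrightarrow> a < b"
  by (metis Lr_strict_mono less_asym linorder_neqE_linordered_idom)

lemma Lr_mono: "0 \<le> a \<Longrightarrow> a \<le> b \<Longrightarrow> Lr h a \<le> Lr h b"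
  by (meson Lr_less_iff order.trans not_less)

lemma Lr_at_1_ge_1: "1 \<le> Lr h 1"
proof (induction h rule: LL.induct)
  case (3 h)
  then have "1 * 1 \<le> Lr (Suc h) 1 * (Lr (Suc h) 1 + Lr h 1)"
    by (intro mult_mono) auto
  then show ?case by simp
qed auto

lemma Lr_scale: "1 \<le> q \<Longrightarrow> 0 \<le> z \<Longrightarrow> q ^ Suc h * Lr h z \<le> Lr h (q * z)"
  unfolding Lr_def by (rule poly_map_real_scale) (auto simp: coeff_LL_eq_0)

lemma continuous_on_Lr: "continuous_on A (Lr h)"
  unfolding Lr_def by (intro continuous_intros)

lemma Lr_eq_half_unique: "\<exists>!z. 0 < z \<and> Lr h z = 1/2"
proof -
  obtain z where z: "0 \<le> z" "z \<le> 1" "Lr h z = 1/2"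
    using IVT'[of "Lr h" 0 "1/2" 1] Lr_at_1_ge_1[of h] continuous_on_Lr by force
  then have "0 < z"
    by (cases "z = 0") auto
  moreover have "w = z" if "0 < w" "Lr h w = 1/2" for w
    using Lr_less_iff[of w z h] Lr_less_iff[of z w h] z that by (cases w z rule: linorder_cases) auto
  ultimately show ?thesis using z by blast
qed

lemma gamma_root: "0 < gamma h" "Lr h (gamma h) = 1/2"
  using theI'[OF Lr_eq_half_unique[of h]] by (simp_all add: gamma_def Lr_def)

lemma less_gamma_iff: "0 \<le> z \<Longrightarrow> z < gamma h \<longleftrightarrow> Lr h z < 1/2"
  using Lr_less_iff[of z "gamma h" h] gamma_root[of h] by simp

lemma gamma_less_iff: "0 \<le> z \<Longrightarrow> gamma h < z \<longleftrightarrow> 1/2 < Lr h z"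
  using Lr_less_iff[of "gamma h" z h] gamma_root[of h] by simp

section \<open>The threshold \<open>gamma_lim\<close>\<close>

lemma Lr_le_Lr_Suc:
  assumes "0 \<le> z" "1 \<le> Lr h z"
  shows "Lr h z \<le> Lr (Suc h) z"
proof (cases h)
  case 0
  then show ?thesis using assms by (simp add: power2_eq_square)
next
  case (Suc k)
  have "Lr (Suc k) z * 1 \<le> Lr (Suc k) z * (Lr (Suc k) z + Lr k z)"
    using assms Suc Lr_nonneg[of z k] by (intro mult_left_mono) auto
  then show ?thesis using Suc by simp
qed

lemma Lr_less_1_if_not_supercritical:
  assumes "0 \<le> z" "\<not> supercritical (\<lambda>h. Lr h z)"
  shows "Lr h z < 1"
proof (rule ccontr)
  assume "\<not> Lr h z < 1"
  then have "1 \<le> Lr h z" by simp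
  moreover have "1 \<le> Lr (Suc h) z"
    using Lr_le_Lr_Suc[OF assms(1) calculation] calculation by simp
  ultimately have "supercritical (\<lambda>h. Lr h z)"
    unfolding supercritical_def by (intro exI[of _ h]) simp
  with assms(2) show False by contradiction
qed

text \<open>A point that is not subcritical has \<open>Lr h z \<ge> 1/2\<close> for infinitely many \<open>h\<close>; since
  \<open>Lr h (q * z) \<ge> q ^ Suc h * Lr h z\<close>, at any larger point some value exceeds \<open>1\<close>,
  which only a supercritical sequence can do.\<close>
lemma supercritical_above_not_subcritical:
  assumes "0 < z" "z < w" "\<not> subcritical (\<lambda>h. Lr h z)"
  shows "supercritical (\<lambda>h. Lr h w)"
proof (rule ccontr)
  assume not_super: "\<not> supercritical (\<lambda>h. Lr h w)"
  define q where "q = w / z"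
  have "1 < q" "w = q * z"
    using assms by (simp_all add: q_def)
  obtain N where N: "2 < q ^ N"
    using real_arch_pow[OF \<open>1 < q\<close>] by blast
  obtain k where k: "N \<le> k" "1/2 \<le> Lr k z"
    using not_subcritical_half_le[OF assms(3), of N] le_Suc_eq by blast
  have "q ^ N * (1/2) \<le> q ^ Suc k * Lr k z"
    using k \<open>1 < q\<close> by (intro mult_mono power_increasing) auto
  also have "\<dots> \<le> Lr k w"
    using Lr_scale[of q z k] \<open>1 < q\<close> \<open>w = q * z\<close> assms(1) by simp
  also have "\<dots> < 1"
    using Lr_less_1_if_not_supercritical[OF _ not_super] assms by simp
  finally show False using N by simp
qed

lemma subcritical_Lr_antimono:
  assumes "subcritical (\<lambda>h. Lr h z)" "0 \<le> w" "w \<le> z"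
  shows "subcritical (\<lambda>h. Lr h w)"
proof -
  obtain h where "Lr h z \<le> 1/2" "Lr (Suc h) z \<le> 1/2" "Lr h z + Lr (Suc h) z < 1"
    using assms(1) unfolding subcritical_def by blast
  moreover have "Lr h w \<le> Lr h z" "Lr (Suc h) w \<le> Lr (Suc h) z"
    using assms Lr_mono by auto
  ultimately show ?thesis
    unfolding subcritical_def by (intro exI[of _ h]) simp
qed

lemma subcritical_Lr_less_1:
  assumes "0 \<le> z" "subcritical (\<lambda>h. Lr h z)"
  shows "z < 1"
proof (rule ccontr)
  assume "\<not> z < 1"
  then have "subcritical (\<lambda>h. Lr h 1)"
    using subcritical_Lr_antimono[OF assms(2)] by simp
  moreover have "supercritical (\<lambda>h. Lr h 1)"
    unfolding supercritical_def by (intro exI[of _ 0]) simp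
  ultimately show False
    using ll_recurrence_not_subcritical_and_supercritical ll_recurrence_Lr[of 1] by simp
qed

lemma subcritical_Lr_half: "subcritical (\<lambda>h. Lr h (1/2))"
  unfolding subcritical_def by (intro exI[of _ 0]) (simp add: power2_eq_square)

definition gamma_lim :: real where
  "gamma_lim = Sup {z. 0 < z \<and> subcritical (\<lambda>h. Lr h z)}"

lemma bdd_above_subcritical: "bdd_above {z. 0 < z \<and> subcritical (\<lambda>h. Lr h z)}"
  by (auto intro!: bdd_aboveI[of _ 1] less_imp_le subcritical_Lr_less_1)

lemma le_gamma_lim: "0 < z \<Longrightarrow> subcritical (\<lambda>h. Lr h z) \<Longrightarrow> z \<le> gamma_lim"
  unfolding gamma_lim_def by (rule cSup_upper) (auto intro: bdd_above_subcritical)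

lemma gamma_lim_ge_half: "1/2 \<le> gamma_lim"
  using le_gamma_lim[OF _ subcritical_Lr_half] by simp

lemma subcritical_below_gamma_lim:
  assumes "0 < z" "z < gamma_lim"
  shows "subcritical (\<lambda>h. Lr h z)"
proof -
  have "{z. 0 < z \<and> subcritical (\<lambda>h. Lr h z)} \<noteq> {}"
    using subcritical_Lr_half by force
  then obtain w where "0 < w" "subcritical (\<lambda>h. Lr h w)" "z < w"
    using assms(2) less_cSup_iff[OF _ bdd_above_subcritical] unfolding gamma_lim_def by auto
  then show ?thesis
    using subcritical_Lr_antimono assms(1) by simp
qed

lemma supercritical_above_gamma_lim:
  assumes "gamma_lim < z"
  shows "supercritical (\<lambda>h. Lr h z)"
proof -
  define w where "w = (gamma_lim + z) / 2"
  have "gamma_lim < w" "w < z" "0 < w"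
    using assms gamma_lim_ge_half by (simp_all add: w_def)
  then have "\<not> subcritical (\<lambda>h. Lr h w)"
    using le_gamma_lim by force
  then show ?thesis
    using supercritical_above_not_subcritical \<open>0 < w\<close> \<open>w < z\<close> by blast
qed

lemma gamma_lim_le: "0 < z \<Longrightarrow> supercritical (\<lambda>h. Lr h z) \<Longrightarrow> gamma_lim \<le> z"
  using subcritical_below_gamma_lim ll_recurrence_not_subcritical_and_supercritical ll_recurrence_Lr
  by (meson less_imp_le not_less)

lemma gamma_tendsto_gamma_lim: "gamma \<longlonglongrightarrow> gamma_lim"
proof (rule order_tendstoI)
  fix a assume "a < gamma_lim"
  show "eventually (\<lambda>h. a < gamma h) sequentially"
  proof (cases "0 < a")
    case True
    then have "eventually (\<lambda>h. Lr h a < 1/2) sequentially"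
      using ll_recurrence_subcritical_eventually_less_half ll_recurrence_Lr
        subcritical_below_gamma_lim \<open>a < gamma_lim\<close> by simp
    then show ?thesis
      by (rule eventually_mono) (use True less_gamma_iff in auto)
  next
    case False
    then show ?thesis using gamma_root(1) by (simp add: not_less order_le_less_trans)
  qed
next
  fix a assume "gamma_lim < a"
  then have "0 < a" using gamma_lim_ge_half by simp
  have "eventually (\<lambda>h. 1/2 < Lr h a) sequentially"
    using ll_recurrence_supercritical_eventually_greater_half ll_recurrence_Lr
      supercritical_above_gamma_lim \<open>gamma_lim < a\<close> \<open>0 < a\<close> by simp
  then show "eventually (\<lambda>h. gamma h < a) sequentially"
    by (rule eventually_mono) (use \<open>0 < a\<close> gamma_less_iff in auto)
qed

section \<open>Numerical bounds\<close>

lemma subcritical_Lr_067418: "subcritical (\<lambda>h. Lr h 0.67418)"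
proof -
  define x where "x = (\<lambda>h. Lr h 0.67418)"
  have x: "ll_recurrence x"
    unfolding x_def by (rule ll_recurrence_Lr) simp
  have x0: "x 0 \<le> 0.67418" by (simp add: x_def)
  have x1: "x 1 \<le> 0.454518673" by (simp add: x_def power2_eq_square)
  have x2: "x 2 \<le> 0.513014624" by (rule ll_recurrence_upper_step[OF x x0 x1]) simp_all
  have x3: "x 3 \<le> 0.496358731" by (rule ll_recurrence_upper_step[OF x x1 x2]) simp_all
  have x4: "x 4 \<le> 0.501011278" by (rule ll_recurrence_upper_step[OF x x2 x3]) simp_all
  have x5: "x 5 \<le> 0.499693623" by (rule ll_recurrence_upper_step[OF x x3 x4]) simp_all
  have x6: "x 6 \<le> 0.500045858" by (rule ll_recurrence_upper_step[OF x x4 x5]) simp_all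
  have x7: "x 7 \<le> 0.499915587" by (rule ll_recurrence_upper_step[OF x x5 x6]) simp_all
  have x8: "x 8 \<le> 0.499896313" by (rule ll_recurrence_upper_step[OF x x6 x7]) simp_all
  have "subcritical x"
    unfolding subcritical_def using x7 x8 by (intro exI[of _ 7]) simp
  then show ?thesis by (simp add: x_def)
qed

lemma supercritical_Lr_0674185: "supercritical (\<lambda>h. Lr h 0.674185)"
proof -
  define x where "x = (\<lambda>h. Lr h 0.674185)"
  have x: "ll_recurrence x"
    unfolding x_def by (rule ll_recurrence_Lr) simp
  have x0: "0.674185 \<le> x 0" by (simp add: x_def)
  have x1: "0.454525414 \<le> x 1" by (simp add: x_def power2_eq_square)
  have x2: "0.513027568 \<le> x 2" by (rule ll_recurrence_lower_step[OF x x0 x1]) simp_all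
  have x3: "0.496381353 \<le> x 3" by (rule ll_recurrence_lower_step[OF x x1 x2]) simp_all
  have x4: "0.501051765 \<le> x 4" by (rule ll_recurrence_lower_step[OF x x2 x3]) simp_all
  have x5: "0.499765624 \<le> x 5" by (rule ll_recurrence_lower_step[OF x x3 x4]) simp_all
  have x6: "0.500174126 \<le> x 6" by (rule ll_recurrence_lower_step[OF x x4 x5]) simp_all
  have x7: "0.500143990 \<le> x 7" by (rule ll_recurrence_lower_step[OF x x5 x6]) simp_all
  have "supercritical x"
    unfolding supercritical_def using x6 x7 by (intro exI[of _ 6]) simp
  then show ?thesis by (simp add: x_def)
qed

lemma gamma_lim_bounds: "0.67418 \<le> gamma_lim" "gamma_lim \<le> 0.674185"
  using le_gamma_lim[OF _ subcritical_Lr_067418] gamma_lim_le[OF _ supercritical_Lr_0674185]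
  by simp_all

lemma le_log_iff_power:
  assumes "1 < b" "0 < x" "0 < n"
  shows "real m / real n \<le> log b x \<longleftrightarrow> b ^ m \<le> x ^ n"
proof -
  have "real m / real n \<le> log b x \<longleftrightarrow> real m \<le> log b (x ^ n)"
    using assms by (simp add: log_nat_power divide_le_eq mult.commute)
  also have "\<dots> \<longleftrightarrow> b ^ m \<le> x ^ n"
    using assms by (simp add: le_log_iff powr_realpow)
  finally show ?thesis .
qed

lemma log_less_iff_power:
  assumes "1 < b" "0 < x" "0 < n"
  shows "log b x < real m / real n \<longleftrightarrow> x ^ n < b ^ m"
proof -
  have "log b x < real m / real n \<longleftrightarrow> log b (x ^ n) < real m"
    using assms by (simp add: log_nat_power less_divide_eq mult.commute)
  also have "\<dots> \<longleftrightarrow> x ^ n < b ^ m"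
    using assms by (simp add: log_less_iff powr_realpow)
  finally show ?thesis .
qed

lemma log_inverse_gamma_lim_bounds:
  "0.568 \<le> log 2 (1 / gamma_lim)" "log 2 (1 / gamma_lim) < 0.569"
proof -
  have pos: "0 < gamma_lim"
    using gamma_lim_ge_half by simp
  have "(2::real) ^ 25 \<le> (1 / 0.674185) ^ 44"
    by (simp add: power_divide)
  also have "\<dots> \<le> (1 / gamma_lim) ^ 44"
    using pos gamma_lim_bounds by (intro power_mono divide_left_mono) auto
  finally have "real 25 / real 44 \<le> log 2 (1 / gamma_lim)"
    using pos by (subst le_log_iff_power) auto
  then show "0.568 \<le> log 2 (1 / gamma_lim)" by simp
  have "(1 / gamma_lim) ^ 58 \<le> (1 / 0.67418) ^ 58"
    using pos gamma_lim_bounds by (intro power_mono divide_left_mono) auto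
  also have "\<dots> < (2::real) ^ 33"
    by (simp add: power_divide)
  finally have "log 2 (1 / gamma_lim) < real 33 / real 58"
    using pos by (subst log_less_iff_power) auto
  then show "log 2 (1 / gamma_lim) < 0.569" by simp
qed

section \<open>Growth of \<open>ell\<close>\<close>

lemma summable_Lr: "0 < z \<Longrightarrow> z < gamma_lim \<Longrightarrow> summable (\<lambda>h. Lr h z)"
  using ll_recurrence_subcritical_summable ll_recurrence_Lr subcritical_below_gamma_lim by simp

lemma ell_mult_power_le:
  assumes "0 < z" "z < gamma_lim"
  shows "real (ell n) * z ^ n \<le> (\<Sum>h. Lr h z)"
proof -
  let ?S = "{h. coeff (LL h) n \<noteq> 0}"
  have "real (ell n) * z ^ n = (\<Sum>h\<in>?S. real (coeff (LL h) n) * z ^ n)"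
    unfolding ell_def of_nat_sum by (rule sum_distrib_right)
  also have "\<dots> \<le> (\<Sum>h\<in>?S. Lr h z)"
    unfolding Lr_def using assms
    by (intro sum_mono coeff_mult_power_le_poly_map_real) simp
  also have "\<dots> \<le> (\<Sum>h. Lr h z)"
    using assms Lr_nonneg
    by (intro sum_le_suminf summable_Lr finite_LL_support) auto
  finally show ?thesis .
qed

text \<open>\<open>ell 0 = 0\<close>, so the value of \<open>theta\<close> at \<open>0\<close> is an arbitrary positive number.\<close>
definition theta :: "nat \<Rightarrow> real" where
  "theta n = (if n = 0 then 1 else real (ell n) * gamma_lim ^ n)"

lemma theta_pos: "0 < theta n"
  using ell_pos[of n] gamma_lim_ge_half by (auto simp: theta_def)

lemma log_ell_eq:
  assumes "1 \<le> n"
  shows "log 2 (real (ell n)) = real n * log 2 (1 / gamma_lim) + log 2 (theta n)"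
proof -
  have "0 < real (ell n)" "0 < gamma_lim"
    using ell_pos[OF assms] gamma_lim_ge_half by simp_all
  then show ?thesis
    using assms by (simp add: theta_def log_mult log_nat_power log_divide)
qed

lemma theta_smallo: "1 < \<kappa> \<Longrightarrow> theta \<in> o(\<lambda>n. \<kappa> ^ n)"
proof -
  assume "1 < \<kappa>"
  define q where "q = (1 + \<kappa>) / 2"
  have q: "1 < q" "q < \<kappa>"
    using \<open>1 < \<kappa>\<close> by (simp_all add: q_def)
  define z where "z = gamma_lim / q"
  have z: "0 < z" "z < gamma_lim" "gamma_lim = z * q"
    using q gamma_lim_ge_half by (simp_all add: z_def field_simps)
  have "theta n \<le> (\<Sum>h. Lr h z) * q ^ n" if "1 \<le> n" for n
  proof -
    have "theta n = (real (ell n) * z ^ n) * q ^ n"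
      using that by (simp add: theta_def z(3) power_mult_distrib)
    also have "\<dots> \<le> (\<Sum>h. Lr h z) * q ^ n"
      using ell_mult_power_le[OF z(1,2)] q by (intro mult_right_mono) auto
    finally show ?thesis .
  qed
  then have "eventually (\<lambda>n. norm (theta n) \<le> (\<Sum>h. Lr h z) * norm (q ^ n)) sequentially"
    using theta_pos q by (intro eventually_sequentiallyI[of 1]) (simp add: less_imp_le)
  then have "theta \<in> O(\<lambda>n. q ^ n)"
    by (rule bigoI)
  also have "(\<lambda>n. q ^ n) \<in> o(\<lambda>n. \<kappa> ^ n)"
  proof (rule smalloI_tendsto)
    show "(\<lambda>n. q ^ n / \<kappa> ^ n) \<longlonglongrightarrow> 0"
      using q by (simp add: power_divide[symmetric] LIMSEQ_power_zero)
  qed (use q in simp)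
  finally show ?thesis .
qed

theorem theorem3:
  shows "(\<forall>h. \<exists>!z::real. z > 0 \<and> poly (map_poly real (LL h)) z = 1 / 2)
    \<and> (\<forall>n. finite {h. coeff (LL h) n \<noteq> 0})
    \<and> (\<exists>\<gamma>::real. gamma \<longlonglongrightarrow> \<gamma>
        \<and> 0.67418 \<le> \<gamma> \<and> \<gamma> < 0.67419
        \<and> 0.568 \<le> log 2 (1 / \<gamma>) \<and> log 2 (1 / \<gamma>) < 0.569
        \<and> (\<exists>\<theta>::nat \<Rightarrow> real. (\<forall>n. \<theta> n > 0)
             \<and> (\<forall>n\<ge>1. log 2 (real (ell n)) = real n * log 2 (1 / \<gamma>) + log 2 (\<theta> n))
             \<and> (\<forall>\<kappa>::real. \<kappa> > 1 \<longrightarrow> \<theta> \<in> o(\<lambda>n. \<kappa> ^ n))))"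
proof (intro conjI allI exI[of _ gamma_lim] exI[of _ theta] impI)
  show "\<exists>!z::real. z > 0 \<and> poly (map_poly real (LL h)) z = 1 / 2" for h
    using Lr_eq_half_unique[of h] by (simp add: Lr_def)
  show "gamma \<longlonglongrightarrow> gamma_lim" by (rule gamma_tendsto_gamma_lim)
  show "gamma_lim < 0.67419" using gamma_lim_bounds(2) by simp
qed (use finite_LL_support gamma_lim_bounds(1) log_inverse_gamma_lim_bounds
      theta_pos log_ell_eq theta_smallo in auto)

end
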